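(* Let $\phi:\mathbb{C}_0\to\mathbb{C}_0$ be a non-constant analytic function of the form $\phi(s)=c_0 s+\varphi(s)$ with $c_0\in\mathbb{N}_0$ and $\varphi\in\mathcal{D}$, such that $f\circ\phi\in\mathcal{A}^+$ for every $f\in\mathcal{A}^+$, so that $C_\phi f=f\circ\phi$ defines a composition operator $C_\phi:\mathcal{A}^+\to\mathcal{A}^+$. Then $C_\phi$ is an isometry (i.e. $\|C_\phi f\|_{\mathcal{A}^+}=\|f\|_{\mathcal{A}^+}$ for all $f\in\mathcal{A}^+$) if and only if $\phi(s)=c_0s+i\tau$ with $c_0\in\mathbb{N}=\{1,2,\dots\}$ and $\tau\in\mathbb{R}$.
   Context: For $\theta\in\mathbb{R}$, $\mathbb{C}_\theta=\{s\in\mathbb{C}:\operatorname{Re}s>\theta\}$. The Wiener–Dirichlet algebra $\mathcal{A}^+$ is the set of functions $f(s)=\sum_{n\ge1}a_n n^{-s}$ with $\|f\|_{\mathcal{A}^+}=\sum_{n\ge1}|a_n|<\infty$, viewed as functions on $\{\operatorname{Re}s\ge0\}$; it is a commutative unital Banach algebra under pointwise multiplication. $\mathcal{D}$ denotes the space of analytic functions $\mathbb{C}_0\to\mathbb{C}$ representable by a convergent Dirichlet series $\sum_{n\ge1}c_n n^{-s}$ for $\operatorname{Re}s$ large enough. $\mathbb{N}_0=\{0,1,2,\dots\}$. *)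

theory Defs
  imports "HOL-Analysis.Analysis"
begin

definition halfplane :: "real \<Rightarrow> complex set" where
  "halfplane \<theta> = {s. Re s > \<theta>}"

text \<open>Dirichlet series with coefficient sequence a (index n >= 1; the entry a 0 is
  multiplied by 0 powr (-s) = 0 and hence irrelevant).\<close>
definition dseries :: "(nat \<Rightarrow> complex) \<Rightarrow> complex \<Rightarrow> complex" where
  "dseries a s = (\<Sum>n. a n * (of_nat n) powr (- s))"

text \<open>Coefficient sequences of elements of the Wiener--Dirichlet algebra A^+.\<close>
definition Aplus :: "(nat \<Rightarrow> complex) set" where
  "Aplus = {a. a 0 = 0 \<and> summable (\<lambda>n. norm (a n))}"

definition Aplus_norm :: "(nat \<Rightarrow> complex) \<Rightarrow> real" where
  "Aplus_norm a = (\<Sum>n. norm (a n))"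

definition Dclass :: "(complex \<Rightarrow> complex) set" where
  "Dclass = {g. g holomorphic_on halfplane 0 \<and>
     (\<exists>c :: nat \<Rightarrow> complex. \<exists>\<sigma>::real. \<forall>s. Re s > \<sigma> \<longrightarrow>
        (\<lambda>n. c n * (of_nat n) powr (- s)) sums g s)}"

text \<open>b represents C_phi f = f o phi, where f has coefficients a.\<close>
definition comp_rep :: "(complex \<Rightarrow> complex) \<Rightarrow> (nat \<Rightarrow> complex) \<Rightarrow> (nat \<Rightarrow> complex) \<Rightarrow> bool" where
  "comp_rep \<phi> a b \<longleftrightarrow> b \<in> Aplus \<and> (\<forall>s \<in> halfplane 0. dseries a (\<phi> s) = dseries b s)"

end

theory Submission
  imports Defs
begin

(*
  An isometric C_phi sends distinct monomials n^-s, m^-s to coefficient sequences with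
  disjoint supports, since the norm of C_phi (n^-s + e m^-s) is 2 for e = 1 and e = -1.
  Letting s \<rightarrow> +\<infinity> along the reals, the image m^-phi(s) of m^-s has its
  leading coefficient at m^c0; hence c0 \<ge> 1, as otherwise the images of 2^-s and 3^-s
  both start at index 1. If 2^-phi(s) had a second nonzero coefficient, at M > 2^c0, a binomial
  expansion shows that its k-th power, the image of 2^-ks, has a nonzero coefficient at the
  leading index (2^(k-c0) M)^c0 of the image of (2^(k-c0) M)^-s for some k, contradicting
  disjointness. So 2^-phi(s) = a 2^(-c0 s) with |a| = 1, and continuity of phi on the connected
  half-plane forces phi(s) = c0 s + i tau. Conversely, for such phi, C_phi moves the coefficient
  of n to n^c0 and multiplies it by n^(-i tau), which preserves the norm.
*)

abbreviation norm_summable :: "(nat \<Rightarrow> complex) \<Rightarrow> bool" where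
  "norm_summable b \<equiv> summable (\<lambda>n. norm (b n))"

lemma nat_powr_eq_exp: "0 < n \<Longrightarrow> (of_nat n :: complex) powr s = exp (s * of_real (ln (real n)))"
  by (simp add: powr_def)

lemma norm_nat_powr: "norm ((of_nat n :: complex) powr s) = (if n = 0 then 0 else real n powr Re s)"
  by (simp add: nat_powr_eq_exp powr_def mult.commute)

lemma nat_powr_of_real: "(of_nat n :: complex) powr (of_real \<sigma>) = of_real (real n powr \<sigma>)"
  using powr_of_real[of "real n" \<sigma>] by simp

lemma norm_nat_powr_neg_le_1: "0 \<le> Re s \<Longrightarrow> norm ((of_nat n :: complex) powr (-s)) \<le> 1"
  by (simp only: norm_nat_powr) (auto simp: powr_minus field_simps intro: ge_one_powr_ge_zero)

lemma nat_power_powr: "(of_nat n ^ c :: complex) powr s = (of_nat n powr s) ^ c"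
proof (cases "n = 0")
  case False
  then have "(of_nat (n ^ c) :: complex) powr s = exp (s * of_real (ln (real (n ^ c))))"
    by (intro nat_powr_eq_exp) simp
  also have "\<dots> = exp (of_nat c * (s * of_real (ln (real n))))"
    using False by (simp add: ln_realpow mult_ac)
  finally show ?thesis
    using False by (simp add: exp_of_nat_mult nat_powr_eq_exp)
qed (cases c; simp)

lemma real_power_powr: "0 \<le> x \<Longrightarrow> (x ^ i) powr \<sigma> = (x powr \<sigma>) ^ i" for x :: real
  by (induction i) (simp_all add: powr_mult)

lemma nat_mult_powr: "(of_nat (K * n) :: complex) powr s = of_nat K powr s * of_nat n powr s"
proof (cases "K = 0 \<or> n = 0")
  case False
  then have "(of_nat (K * n) :: complex) powr s = exp (s * of_real (ln (real (K * n))))"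
    by (intro nat_powr_eq_exp) simp
  then show ?thesis
    using False by (simp add: nat_powr_eq_exp ln_mult exp_add[symmetric] algebra_simps)
qed auto

lemma summable_norm_dirichlet_terms:
  assumes "norm_summable b" "0 \<le> Re s"
  shows "summable (\<lambda>n. norm (b n * of_nat n powr (-s)))"
proof (rule summable_comparison_test'[OF assms(1)])
  fix n :: nat
  have "norm (b n) * norm ((of_nat n :: complex) powr (-s)) \<le> norm (b n) * 1"
    by (intro mult_left_mono norm_nat_powr_neg_le_1 assms(2)) simp
  then show "norm (norm (b n * of_nat n powr (-s))) \<le> norm (b n)"
    by (simp add: norm_mult)
qed

lemma summable_dirichlet_terms:
  "norm_summable b \<Longrightarrow> 0 \<le> Re s \<Longrightarrow> summable (\<lambda>n. b n * of_nat n powr (-s))"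
  by (rule summable_norm_cancel, rule summable_norm_dirichlet_terms)

lemma norm_summable_add: "norm_summable a \<Longrightarrow> norm_summable b \<Longrightarrow> norm_summable (\<lambda>n. a n + b n)"
  by (rule summable_comparison_test'[OF summable_add, of "\<lambda>n. norm (a n)" "\<lambda>n. norm (b n)"])
     (simp_all add: norm_triangle_ineq)

lemma norm_summable_cmult: "norm_summable b \<Longrightarrow> norm_summable (\<lambda>n. c * b n)"
  by (simp add: norm_mult summable_mult)

lemma norm_summable_diff: "norm_summable a \<Longrightarrow> norm_summable b \<Longrightarrow> norm_summable (\<lambda>n. a n - b n)"
  using norm_summable_add[of a "\<lambda>n. (-1) * b n"] norm_summable_cmult[of b "-1"] by simp

lemma norm_summable_sum:
  "finite I \<Longrightarrow> (\<And>i. i \<in> I \<Longrightarrow> norm_summable (f i)) \<Longrightarrow> norm_summable (\<lambda>n. \<Sum>i\<in>I. f i n)"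
  by (induction I rule: finite_induct) (simp_all add: norm_summable_add)

lemma dseries_add: "norm_summable a \<Longrightarrow> norm_summable b \<Longrightarrow> 0 \<le> Re s \<Longrightarrow>
   dseries (\<lambda>n. a n + b n) s = dseries a s + dseries b s"
  unfolding dseries_def by (simp add: distrib_right suminf_add summable_dirichlet_terms)

lemma dseries_cmult: "norm_summable b \<Longrightarrow> 0 \<le> Re s \<Longrightarrow> dseries (\<lambda>n. c * b n) s = c * dseries b s"
  unfolding dseries_def by (simp add: mult.assoc suminf_mult summable_dirichlet_terms)

lemma dseries_diff: "norm_summable a \<Longrightarrow> norm_summable b \<Longrightarrow> 0 \<le> Re s \<Longrightarrow>
   dseries (\<lambda>n. a n - b n) s = dseries a s - dseries b s"
  unfolding dseries_def by (simp add: left_diff_distrib suminf_diff summable_dirichlet_terms)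

lemma dseries_sum: "finite I \<Longrightarrow> (\<And>i. i \<in> I \<Longrightarrow> norm_summable (f i)) \<Longrightarrow> 0 \<le> Re s \<Longrightarrow>
   dseries (\<lambda>n. \<Sum>i\<in>I. f i n) s = (\<Sum>i\<in>I. dseries (f i) s)"
  by (induction I rule: finite_induct) (simp_all add: dseries_add norm_summable_sum, simp add: dseries_def)

definition monomial :: "nat \<Rightarrow> nat \<Rightarrow> complex" where
  "monomial m n = (if n = m then 1 else 0)"

lemma norm_summable_monomial: "norm_summable (monomial m)"
  unfolding monomial_def
  using summable_single[of m "\<lambda>_. 1::real"] by (simp add: if_distrib cong: if_cong)

lemma dseries_monomial: "dseries (monomial m) s = of_nat m powr (-s)"
proof -
  have "(\<lambda>n. monomial m n * of_nat n powr (-s)) = (\<lambda>n. if n = m then (of_nat n :: complex) powr (-s) else 0)"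
    by (auto simp: monomial_def fun_eq_iff)
  then show ?thesis unfolding dseries_def
    using sums_single[of m "\<lambda>n. (of_nat n :: complex) powr (-s)"] by (simp add: sums_iff)
qed

lemma monomial_in_Aplus: "1 \<le> m \<Longrightarrow> monomial m \<in> Aplus"
  using norm_summable_monomial[of m] by (simp add: Aplus_def monomial_def)

lemma Aplus_norm_cmult_monomial: "Aplus_norm (\<lambda>n. c * monomial m n) = norm c"
proof -
  have "(\<lambda>n. norm (c * monomial m n)) = (\<lambda>n. if n = m then norm c else 0)"
    by (simp add: fun_eq_iff monomial_def)
  then show ?thesis unfolding Aplus_norm_def
    using sums_single[of m "\<lambda>_. norm c"] by (simp add: sums_iff)
qed

lemma Aplus_norm_two_monomials:
  assumes "n \<noteq> m"
  shows "Aplus_norm (\<lambda>k. monomial n k + e * monomial m k) = 1 + norm e"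
proof -
  have "(\<lambda>k. norm (monomial n k + e * monomial m k)) = (\<lambda>k. (if k = n then 1 else 0) + (if k = m then norm e else 0))"
    using assms by (auto simp: fun_eq_iff monomial_def)
  moreover have "(\<lambda>k. (if k = n then 1 else 0) + (if k = m then norm e else 0)) sums (1 + norm e)"
    by (intro sums_add sums_single)
  ultimately show ?thesis
    unfolding Aplus_norm_def by (simp add: sums_iff)
qed

lemma powr_tendsto_0_at_top:
  assumes "0 < \<theta>" "\<theta> < (1::real)"
  shows "((\<lambda>\<sigma>::real. \<theta> powr \<sigma>) \<longlongrightarrow> 0) at_top"
proof -
  have "filterlim (\<lambda>\<sigma>. ln \<theta> * \<sigma>) at_bot at_top"
    using assms by (intro filterlim_tendsto_neg_mult_at_bot[OF tendsto_const]) (auto simp: filterlim_ident)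
  then have "((\<lambda>\<sigma>. exp (ln \<theta> * \<sigma>)) \<longlongrightarrow> 0) at_top"
    by (rule filterlim_compose[OF exp_at_bot])
  then show ?thesis using assms by (simp add: powr_def mult.commute)
qed

lemma scaled_nat_powr:
  assumes "0 < n"
  shows "of_real (real l powr \<sigma>) * (of_nat n :: complex) powr (- of_real \<sigma>)
     = of_real ((real l / real n) powr \<sigma>)"
proof -
  have "(of_nat n :: complex) powr (- of_real \<sigma>) = of_real (real n powr (- \<sigma>))"
    using nat_powr_of_real[of n "-\<sigma>"] by simp
  moreover have "(real l / real n) powr \<sigma> = real l powr \<sigma> * real n powr (- \<sigma>)"
    using assms by (subst powr_divide) (auto simp: powr_minus divide_inverse)
  ultimately show ?thesis by simp
qed

lemma norm_scaled_dseries_minus_leading_le: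
  fixes b :: "nat \<Rightarrow> complex"
  assumes b: "norm_summable b" and l: "1 \<le> l" and below: "\<And>j. 1 \<le> j \<Longrightarrow> j < l \<Longrightarrow> b j = 0"
    and \<sigma>: "0 \<le> \<sigma>"
  shows "norm (of_real (real l powr \<sigma>) * dseries b (of_real \<sigma>) - b l)
           \<le> (\<Sum>n. norm (b n)) * (real l / real (l + 1)) powr \<sigma>"
proof -
  define \<theta> where "\<theta> = real l / real (l + 1)"
  define e where "e n = of_real (real l powr \<sigma>) * (b n * of_nat n powr (- of_real \<sigma>))
    - (if n = l then b l else 0)" for n
  have e_le: "norm (e n) \<le> norm (b n) * \<theta> powr \<sigma>" for n
  proof (cases "n < l")
    case True
    then have "e n = 0" using below[of n] by (cases "n = 0") (auto simp: e_def)
    then show ?thesis by simp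
  next
    case False
    then have "0 < n" using l by simp
    then have e: "e n = b n * of_real ((real l / real n) powr \<sigma>) - (if n = l then b l else 0)"
      unfolding e_def by (subst scaled_nat_powr[symmetric]) (simp_all add: mult_ac)
    show ?thesis
    proof (cases "n = l")
      case True then show ?thesis using e l by simp
    next
      case False
      then have "real l / real n \<le> \<theta>"
        using \<open>\<not> n < l\<close> l unfolding \<theta>_def by (simp add: frac_le)
      then have "(real l / real n) powr \<sigma> \<le> \<theta> powr \<sigma>"
        using \<sigma> by (simp add: powr_mono2)
      then show ?thesis using e False by (simp add: norm_mult mult_left_mono)
    qed
  qed
  have "e sums (of_real (real l powr \<sigma>) * dseries b (of_real \<sigma>) - b l)"
    unfolding e_def dseries_def
    by (intro sums_diff sums_mult summable_sums summable_dirichlet_terms b)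
       (simp_all add: \<sigma> sums_single[of l "\<lambda>_. b l", simplified])
  then have "norm (of_real (real l powr \<sigma>) * dseries b (of_real \<sigma>) - b l) = norm (suminf e)"
    by (simp add: sums_iff)
  also have "\<dots> \<le> (\<Sum>n. norm (b n) * \<theta> powr \<sigma>)"
    by (rule norm_suminf_le[OF e_le summable_mult2[OF b]])
  also have "\<dots> = (\<Sum>n. norm (b n)) * \<theta> powr \<sigma>"
    using b by (rule suminf_mult2[symmetric])
  finally show ?thesis unfolding \<theta>_def .
qed

lemma leading_coeff_tendsto:
  fixes b :: "nat \<Rightarrow> complex"
  assumes b: "norm_summable b" and l: "1 \<le> l" and below: "\<And>j. 1 \<le> j \<Longrightarrow> j < l \<Longrightarrow> b j = 0"
  shows "((\<lambda>\<sigma>::real. of_real (real l powr \<sigma>) * dseries b (of_real \<sigma>)) \<longlongrightarrow> b l) at_top"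
proof -
  define \<theta> where "\<theta> = real l / real (l + 1)"
  have "((\<lambda>\<sigma>. (\<Sum>n. norm (b n)) * \<theta> powr \<sigma>) \<longlongrightarrow> 0) at_top"
    using l unfolding \<theta>_def
    by (intro tendsto_mult_right_zero powr_tendsto_0_at_top) (auto simp: field_simps)
  moreover have "eventually (\<lambda>\<sigma>. norm (of_real (real l powr \<sigma>) * dseries b (of_real \<sigma>) - b l)
      \<le> (\<Sum>n. norm (b n)) * \<theta> powr \<sigma>) at_top"
    using norm_scaled_dseries_minus_leading_le[OF b l below] unfolding \<theta>_def
    by (intro eventually_at_top_linorderI[of 0]) blast
  ultimately show ?thesis
    by (subst LIM_zero_iff[symmetric]) (rule Lim_null_comparison[rotated])
qed

lemma obtain_next_nonzero:
  fixes b :: "nat \<Rightarrow> 'a::zero"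
  assumes "\<exists>j>k. b j \<noteq> 0"
  obtains l where "k < l" "b l \<noteq> 0" "\<And>j. k < j \<Longrightarrow> j < l \<Longrightarrow> b j = 0"
proof
  define l where "l = (LEAST j. k < j \<and> b j \<noteq> 0)"
  show "k < l" "b l \<noteq> 0" using LeastI_ex[OF assms] unfolding l_def by auto
  show "\<And>j. k < j \<Longrightarrow> j < l \<Longrightarrow> b j = 0" using not_less_Least unfolding l_def by blast
qed

lemma scaled_tendsto_0_below:
  fixes F :: "real \<Rightarrow> complex"
  assumes "1 \<le> p" "p < q" and lim: "((\<lambda>\<sigma>. of_real (real q powr \<sigma>) * F \<sigma>) \<longlongrightarrow> c) at_top"
  shows "((\<lambda>\<sigma>. of_real (real p powr \<sigma>) * F \<sigma>) \<longlongrightarrow> 0) at_top"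
proof -
  have "((\<lambda>\<sigma>. of_real ((real p / real q) powr \<sigma>) * (of_real (real q powr \<sigma>) * F \<sigma>)) \<longlongrightarrow> of_real 0 * c) at_top"
    using assms by (intro tendsto_mult tendsto_of_real powr_tendsto_0_at_top lim) auto
  moreover have "(real p / real q) powr \<sigma> * real q powr \<sigma> = real p powr \<sigma>" for \<sigma>
    using assms by (simp add: powr_divide)
  ultimately show ?thesis
    by (simp add: mult.assoc[symmetric] of_real_mult[symmetric] del: of_real_mult)
qed

lemma scaled_limits_same_index:
  fixes F :: "real \<Rightarrow> complex"
  assumes "1 \<le> p" "((\<lambda>\<sigma>. of_real (real p powr \<sigma>) * F \<sigma>) \<longlongrightarrow> \<alpha>) at_top" "\<alpha> \<noteq> 0"
    and "1 \<le> q" "((\<lambda>\<sigma>. of_real (real q powr \<sigma>) * F \<sigma>) \<longlongrightarrow> \<beta>) at_top" "\<beta> \<noteq> 0"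
  shows "p = q"
proof (rule linorder_cases[of p q])
  assume "p < q"
  then have "((\<lambda>\<sigma>. of_real (real p powr \<sigma>) * F \<sigma>) \<longlongrightarrow> 0) at_top"
    by (rule scaled_tendsto_0_below[OF assms(1) _ assms(5)])
  with assms(2,3) show ?thesis
    using tendsto_unique[OF trivial_limit_at_top_linorder] by blast
next
  assume "q < p"
  then have "((\<lambda>\<sigma>. of_real (real q powr \<sigma>) * F \<sigma>) \<longlongrightarrow> 0) at_top"
    by (rule scaled_tendsto_0_below[OF assms(4) _ assms(2)])
  with assms(5,6) show ?thesis
    using tendsto_unique[OF trivial_limit_at_top_linorder] by blast
qed

lemma dseries_eq_0_if_coeffs_vanish:
  assumes "\<And>j. 0 < j \<Longrightarrow> b j = 0"
  shows "dseries b s = 0"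
proof -
  have "(\<lambda>n. b n * of_nat n powr (-s)) = (\<lambda>n. 0)"
    using assms by (auto simp: fun_eq_iff intro: gr0I)
  then show ?thesis by (simp add: dseries_def)
qed

lemma leading_coeff_from_limit:
  fixes b :: "nat \<Rightarrow> complex"
  assumes b: "norm_summable b" and K: "1 \<le> K"
    and lim: "((\<lambda>\<sigma>::real. of_real (real K powr \<sigma>) * dseries b (of_real \<sigma>)) \<longlongrightarrow> \<mu>) at_top"
    and "\<mu> \<noteq> 0"
  shows "b K = \<mu>" "\<And>j. 1 \<le> j \<Longrightarrow> j < K \<Longrightarrow> b j = 0"
proof -
  have "\<exists>j>0. b j \<noteq> 0"
  proof (rule ccontr)
    assume "\<not> ?thesis"
    then have "dseries b s = 0" for s by (intro dseries_eq_0_if_coeffs_vanish) blast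
    then have "((\<lambda>\<sigma>::real. 0) \<longlongrightarrow> \<mu>) at_top" using lim by simp
    then show False
      using tendsto_unique[OF trivial_limit_at_top_linorder _ tendsto_const] \<open>\<mu> \<noteq> 0\<close> by blast
  qed
  then obtain l where l: "0 < l" "b l \<noteq> 0" and below: "\<And>j. 0 < j \<Longrightarrow> j < l \<Longrightarrow> b j = 0"
    using obtain_next_nonzero by blast
  have lim_l: "((\<lambda>\<sigma>::real. of_real (real l powr \<sigma>) * dseries b (of_real \<sigma>)) \<longlongrightarrow> b l) at_top"
    using l below by (intro leading_coeff_tendsto b) auto
  have "l = K"
    using l by (intro scaled_limits_same_index[OF _ lim_l _ K lim]) (simp_all add: \<open>\<mu> \<noteq> 0\<close>)
  then show "b K = \<mu>"
    using tendsto_unique[OF trivial_limit_at_top_linorder lim_l] lim by simp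
  show "\<And>j. 1 \<le> j \<Longrightarrow> j < K \<Longrightarrow> b j = 0" using below \<open>l = K\<close> by simp
qed

lemma dseries_coeffs_unique:
  fixes b b' :: "nat \<Rightarrow> complex"
  assumes b: "norm_summable b" and b': "norm_summable b'" and "b 0 = b' 0"
    and eq: "\<And>\<sigma>. \<sigma> > \<sigma>0 \<Longrightarrow> dseries b (of_real \<sigma>) = dseries b' (of_real \<sigma>)"
  shows "b = b'"
proof (rule ccontr)
  define d where "d = (\<lambda>n. b n - b' n)"
  assume "b \<noteq> b'"
  then obtain j where "b j \<noteq> b' j" by auto
  then have "\<exists>j>0. d j \<noteq> 0" using \<open>b 0 = b' 0\<close> by (auto simp: d_def intro!: exI[of _ j] gr0I)
  then obtain l where l: "0 < l" "d l \<noteq> 0" and below: "\<And>j. 0 < j \<Longrightarrow> j < l \<Longrightarrow> d j = 0"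
    using obtain_next_nonzero by blast
  have d: "norm_summable d" unfolding d_def by (rule norm_summable_diff[OF b b'])
  have "((\<lambda>\<sigma>::real. of_real (real l powr \<sigma>) * dseries d (of_real \<sigma>)) \<longlongrightarrow> d l) at_top"
    using l below by (intro leading_coeff_tendsto d) auto
  moreover have "eventually (\<lambda>\<sigma>::real. of_real (real l powr \<sigma>) * dseries d (of_real \<sigma>) = 0) at_top"
    by (rule eventually_at_top_linorderI[of "max \<sigma>0 0 + 1"])
       (simp add: d_def dseries_diff[OF b b'] eq)
  ultimately have "((\<lambda>\<sigma>::real. 0) \<longlongrightarrow> d l) at_top"
    by (rule Lim_transform_eventually)
  then show False
    using tendsto_unique[OF trivial_limit_at_top_linorder _ tendsto_const] l(2) by blast
qed

definition spread :: "(nat \<Rightarrow> nat) \<Rightarrow> (nat \<Rightarrow> complex) \<Rightarrow> nat \<Rightarrow> complex" where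
  "spread g a j = (if j \<in> range g then a (inv g j) else 0)"

lemma spread_apply: "strict_mono g \<Longrightarrow> spread g a (g n) = a n"
  unfolding spread_def using strict_mono_imp_inj_on[of g UNIV] by (simp add: inv_f_f)

lemma sums_spread_iff:
  fixes h :: "nat \<Rightarrow> complex \<Rightarrow> 'b::real_normed_vector"
  assumes g: "strict_mono g" and h: "\<And>j. h j 0 = 0"
  shows "(\<lambda>j. h j (spread g a j)) sums c \<longleftrightarrow> (\<lambda>n. h (g n) (a n)) sums c"
proof -
  have "\<And>j. j \<notin> range g \<Longrightarrow> h j (spread g a j) = 0"
    by (simp add: spread_def h)
  from sums_mono_reindex[OF g, where f = "\<lambda>j. h j (spread g a j)", OF this] show ?thesis
    by (simp add: spread_apply[OF g])
qed

lemma sums_norm_spread: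
  "strict_mono g \<Longrightarrow> norm_summable a \<Longrightarrow> (\<lambda>j. norm (spread g a j)) sums Aplus_norm a"
  unfolding Aplus_norm_def by (subst sums_spread_iff[where h = "\<lambda>_. norm"]) (simp_all add: summable_sums)

lemma norm_summable_spread: "strict_mono g \<Longrightarrow> norm_summable a \<Longrightarrow> norm_summable (spread g a)"
  by (rule sums_summable[OF sums_norm_spread])

lemma Aplus_norm_spread: "strict_mono g \<Longrightarrow> norm_summable a \<Longrightarrow> Aplus_norm (spread g a) = Aplus_norm a"
  unfolding Aplus_norm_def[of "spread g a"] by (rule sums_unique[symmetric, OF sums_norm_spread])

lemma dseries_spread:
  assumes "strict_mono g" "norm_summable a" "0 \<le> Re s"
  shows "dseries (spread g a) s = (\<Sum>n. a n * of_nat (g n) powr (-s))"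
proof -
  have "(\<lambda>j. spread g a j * of_nat j powr (-s)) sums dseries (spread g a) s"
    unfolding dseries_def
    using assms by (intro summable_sums summable_dirichlet_terms norm_summable_spread)
  then show ?thesis
    using sums_spread_iff[OF assms(1), of "\<lambda>j x. x * of_nat j powr (-s)"] by (simp add: sums_iff)
qed

definition dilate :: "nat \<Rightarrow> (nat \<Rightarrow> complex) \<Rightarrow> nat \<Rightarrow> complex" where
  "dilate K b n = (if K dvd n then b (n div K) else 0)"

lemma strict_mono_mult: "0 < K \<Longrightarrow> strict_mono ((*) K :: nat \<Rightarrow> nat)"
  by (simp add: strict_mono_def)

lemma dilate_eq_spread:
  assumes "0 < K" shows "dilate K b = spread ((*) K) b"
proof
  fix n
  show "dilate K b n = spread ((*) K) b n"
  proof (cases "K dvd n")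
    case True
    then obtain q where "n = K * q" by blast
    then show ?thesis using assms by (simp add: dilate_def spread_apply[OF strict_mono_mult])
  qed (auto simp: dilate_def spread_def)
qed

lemma norm_summable_dilate: "0 < K \<Longrightarrow> norm_summable b \<Longrightarrow> norm_summable (dilate K b)"
  by (simp add: dilate_eq_spread norm_summable_spread strict_mono_mult)

lemma dseries_dilate:
  assumes K: "0 < K" and b: "norm_summable b" and s: "0 \<le> Re s"
  shows "dseries (dilate K b) s = of_nat K powr (-s) * dseries b s"
proof -
  have "dseries (dilate K b) s = (\<Sum>n. b n * of_nat (K * n) powr (-s))"
    unfolding dilate_eq_spread[OF K] by (rule dseries_spread[OF strict_mono_mult[OF K] b s])
  also have "\<dots> = (\<Sum>n. of_nat K powr (-s) * (b n * of_nat n powr (-s)))"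
    unfolding nat_mult_powr by (simp add: mult_ac)
  also have "\<dots> = of_nat K powr (-s) * dseries b s"
    unfolding dseries_def by (rule suminf_mult[OF summable_dirichlet_terms[OF b s]])
  finally show ?thesis .
qed

lemma dilate_at_0: "dilate K b 0 = b 0"
  by (simp add: dilate_def)

lemma dilate_mult_cancel: "0 < L \<Longrightarrow> dilate (L * K) b (L * N) = dilate K b N"
  by (simp add: dilate_def)

lemma halfplane_iff [simp]: "s \<in> halfplane \<theta> \<longleftrightarrow> \<theta> < Re s"
  by (simp add: halfplane_def)

lemma nat_powr_shift:
  "(of_nat n :: complex) powr (- (of_nat c * s + w)) = of_nat n powr (-w) * of_nat (n ^ c) powr (-s)"
proof (cases "n = 0")
  case False
  have "(of_nat (n ^ c) :: complex) powr (-s) = exp (of_nat c * (- s * of_real (ln (real n))))"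
    using False by (simp only: of_nat_power nat_power_powr nat_powr_eq_exp exp_of_nat_mult)
  then show ?thesis
    using False by (simp add: nat_powr_eq_exp exp_add[symmetric] algebra_simps)
qed simp

lemma Aplus_norm_comp_rep_shift:
  assumes c: "1 \<le> c" and \<phi>: "\<forall>s\<in>halfplane 0. \<phi> s = of_nat c * s + \<i> * of_real \<tau>"
    and a: "a \<in> Aplus" and b: "comp_rep \<phi> a b"
  shows "Aplus_norm b = Aplus_norm a"
proof -
  define g where "g n = n ^ c" for n :: nat
  have g: "strict_mono g" unfolding g_def strict_mono_def using c
    by (auto intro: power_strict_mono)
  define a' where "a' n = a n * (of_nat n :: complex) powr (- (\<i> * of_real \<tau>))" for n
  have norm_a': "norm (a' n) = norm (a n)" for n
    using a by (cases "n = 0") (simp_all add: a'_def Aplus_def norm_mult norm_nat_powr)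
  have "b = spread g a'"
  proof (rule dseries_coeffs_unique[of _ _ 0])
    show "norm_summable b" "b 0 = spread g a' 0"
      using b c spread_apply[OF g, of a' 0] by (auto simp: comp_rep_def Aplus_def g_def a'_def zero_power)
    show "norm_summable (spread g a')"
      using a by (intro norm_summable_spread g) (simp add: Aplus_def norm_a')
  next
    fix \<sigma> :: real assume "0 < \<sigma>"
    then have "dseries b (of_real \<sigma>) = dseries a (of_nat c * of_real \<sigma> + \<i> * of_real \<tau>)"
      using b \<phi> by (simp add: comp_rep_def)
    also have "\<dots> = (\<Sum>n. a' n * of_nat (g n) powr (- of_real \<sigma>))"
      unfolding dseries_def g_def a'_def by (simp only: nat_powr_shift mult.assoc)
    also have "\<dots> = dseries (spread g a') (of_real \<sigma>)"
      using a \<open>0 < \<sigma>\<close> by (intro dseries_spread[symmetric] g) (simp_all add: Aplus_def norm_a')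
    finally show "dseries b (of_real \<sigma>) = dseries (spread g a') (of_real \<sigma>)" .
  qed
  then have "Aplus_norm b = Aplus_norm a'"
    using a by (simp add: Aplus_norm_spread[OF g] Aplus_def norm_a')
  then show ?thesis by (simp add: Aplus_norm_def norm_a')
qed

lemma binomial_sum_nonzero:
  fixes y :: "nat \<Rightarrow> 'a::comm_ring_1"
  assumes "y c \<noteq> 0"
  shows "\<exists>k\<ge>k0. (\<Sum>i\<le>c. of_nat (k choose i) * y i) \<noteq> 0"
  using assms
proof (induction c arbitrary: y k0)
  case (Suc c)
  define G where "G k = (\<Sum>i\<le>Suc c. of_nat (k choose i) * y i)" for k
  obtain k where k: "k \<ge> k0" "(\<Sum>i\<le>c. of_nat (k choose i) * y (Suc i)) \<noteq> 0"
    using Suc.IH[of "\<lambda>i. y (Suc i)"] Suc.prems by blast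
  have "G (Suc k) - G k = (\<Sum>i\<le>c. of_nat (k choose i) * y (Suc i))"
    unfolding G_def by (subst (1 2) sum.atMost_Suc_shift) (simp add: algebra_simps sum.distrib)
  then have "G (Suc k) \<noteq> 0 \<or> G k \<noteq> 0" using k(2) by auto
  then show ?case using k(1) unfolding G_def by (metis le_SucI)
qed auto

text \<open>If Q j are the coefficients of X^j, then binomial_dilate L alpha Q i are those of
  (X + alpha L^-s)^i.\<close>
definition binomial_dilate :: "nat \<Rightarrow> complex \<Rightarrow> (nat \<Rightarrow> nat \<Rightarrow> complex) \<Rightarrow> nat \<Rightarrow> nat \<Rightarrow> complex" where
  "binomial_dilate L \<alpha> Q i n = (\<Sum>j\<le>i. of_nat (i choose j) * \<alpha> ^ (i - j) * dilate (L ^ (i - j)) (Q j) n)"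

lemma norm_summable_binomial_dilate:
  "0 < L \<Longrightarrow> (\<And>j. norm_summable (Q j)) \<Longrightarrow> norm_summable (binomial_dilate L \<alpha> Q i)"
  unfolding binomial_dilate_def by (intro norm_summable_sum norm_summable_cmult norm_summable_dilate) simp_all

lemma binomial_dilate_at_0: "(\<And>j. Q j 0 = 0) \<Longrightarrow> binomial_dilate L \<alpha> Q i 0 = 0"
  by (simp add: binomial_dilate_def dilate_at_0)

lemma dseries_binomial_dilate:
  assumes L: "0 < L" and Q: "\<And>j. norm_summable (Q j)" and s: "0 \<le> Re s"
    and X: "\<And>j. dseries (Q j) s = X ^ j"
  shows "dseries (binomial_dilate L \<alpha> Q i) s = (X + \<alpha> * of_nat L powr (-s)) ^ i"
proof -
  have D: "norm_summable (dilate (L ^ (i - j)) (Q j))" for j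
    using L Q by (simp add: norm_summable_dilate)
  have "dseries (binomial_dilate L \<alpha> Q i) s
      = (\<Sum>j\<le>i. dseries (\<lambda>n. (of_nat (i choose j) * \<alpha> ^ (i - j)) * dilate (L ^ (i - j)) (Q j) n) s)"
    unfolding binomial_dilate_def by (rule dseries_sum) (simp_all add: D norm_summable_cmult s)
  also have "\<dots> = (\<Sum>j\<le>i. of_nat (i choose j) * \<alpha> ^ (i - j) * dseries (dilate (L ^ (i - j)) (Q j)) s)"
    by (simp only: dseries_cmult[OF D s])
  also have "\<dots> = (\<Sum>j\<le>i. of_nat (i choose j) * X ^ j * (\<alpha> * of_nat L powr (-s)) ^ (i - j))"
    using L Q s by (simp add: dseries_dilate X nat_power_powr power_mult_distrib mult_ac)
  also have "\<dots> = (X + \<alpha> * of_nat L powr (-s)) ^ i"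
    by (rule binomial_ring[symmetric])
  finally show ?thesis .
qed

lemma binomial_dilate_at_mixed_power:
  fixes R :: "nat \<Rightarrow> nat \<Rightarrow> complex"
  assumes L: "1 \<le> L" and LM: "L < M" and ck: "c \<le> k"
    and below: "\<And>i j. 1 \<le> j \<Longrightarrow> j < M ^ i \<Longrightarrow> R i j = 0"
  shows "binomial_dilate L a R k (L ^ (k - c) * M ^ c)
     = (\<Sum>i\<le>c. of_nat (k choose i) * a ^ (k - i) * dilate (L ^ (c - i)) (R i) (M ^ c))"
proof -
  define T where "T i = of_nat (k choose i) * a ^ (k - i) * dilate (L ^ (k - i)) (R i) (L ^ (k - c) * M ^ c)" for i
  have split: "{..k} = {..c} \<union> {c<..k}" using ck by auto
  have "binomial_dilate L a R k (L ^ (k - c) * M ^ c) = sum T {..c} + sum T {c<..k}"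
    unfolding binomial_dilate_def T_def split by (rule sum.union_disjoint) auto
  also have "sum T {c<..k} = 0"
  proof (intro sum.neutral ballI)
    fix i assume i: "i \<in> {c<..k}"
    have "L ^ (i - c) * M ^ c < M ^ (i - c) * M ^ c"
      using i LM L by (intro mult_strict_right_mono power_strict_mono) auto
    also have "\<dots> = M ^ i" using i by (simp flip: power_add)
    finally have zero: "R i (L ^ (i - c) * M ^ c) = 0"
      using L LM by (intro below) auto
    have "L ^ (k - c) * M ^ c = L ^ (k - i) * (L ^ (i - c) * M ^ c)"
      using i by (simp flip: power_add mult.assoc)
    then have "dilate (L ^ (k - i)) (R i) (L ^ (k - c) * M ^ c)
        = dilate (L ^ (k - i) * 1) (R i) (L ^ (k - i) * (L ^ (i - c) * M ^ c))"
      by (simp only: mult_1_right)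
    also have "\<dots> = R i (L ^ (i - c) * M ^ c)"
      using L by (subst dilate_mult_cancel) (simp_all add: dilate_def)
    finally show "T i = 0" by (simp add: T_def zero)
  qed
  also have "sum T {..c} = (\<Sum>i\<le>c. of_nat (k choose i) * a ^ (k - i) * dilate (L ^ (c - i)) (R i) (M ^ c))"
  proof (intro sum.cong refl)
    fix i assume "i \<in> {..c}"
    then have "L ^ (k - i) = L ^ (k - c) * L ^ (c - i)" using ck by (simp flip: power_add)
    then show "T i = of_nat (k choose i) * a ^ (k - i) * dilate (L ^ (c - i)) (R i) (M ^ c)"
      using L by (simp add: T_def dilate_mult_cancel)
  qed
  finally show ?thesis by simp
qed

lemma leading_coeff_powers:
  fixes r :: "nat \<Rightarrow> complex" and R :: "nat \<Rightarrow> nat \<Rightarrow> complex"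
  assumes r: "norm_summable r" and M: "1 \<le> M" "r M \<noteq> 0" and below: "\<And>j. 1 \<le> j \<Longrightarrow> j < M \<Longrightarrow> r j = 0"
    and R: "\<And>i. norm_summable (R i)"
    and pow: "\<And>i \<sigma>. 0 < \<sigma> \<Longrightarrow> dseries (R i) (of_real \<sigma>) = dseries r (of_real \<sigma>) ^ i"
  shows "R i (M ^ i) = r M ^ i" "\<And>j. 1 \<le> j \<Longrightarrow> j < M ^ i \<Longrightarrow> R i j = 0"
proof -
  have "((\<lambda>\<sigma>::real. (of_real (real M powr \<sigma>) * dseries r (of_real \<sigma>)) ^ i) \<longlongrightarrow> r M ^ i) at_top"
    by (intro tendsto_power leading_coeff_tendsto r M below)
  moreover have "eventually (\<lambda>\<sigma>::real. (of_real (real M powr \<sigma>) * dseries r (of_real \<sigma>)) ^ i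
      = of_real (real (M ^ i) powr \<sigma>) * dseries (R i) (of_real \<sigma>)) at_top"
    by (intro eventually_at_top_linorderI[of 1])
       (simp add: pow power_mult_distrib real_power_powr)
  ultimately have lim: "((\<lambda>\<sigma>::real. of_real (real (M ^ i) powr \<sigma>) * dseries (R i) (of_real \<sigma>)) \<longlongrightarrow> r M ^ i) at_top"
    by (rule Lim_transform_eventually)
  show "R i (M ^ i) = r M ^ i" "\<And>j. 1 \<le> j \<Longrightarrow> j < M ^ i \<Longrightarrow> R i j = 0"
    using leading_coeff_from_limit[OF R _ lim] M by simp_all
qed

lemma power_coeff_at_mixed_power_nonzero:
  fixes u :: "nat \<Rightarrow> complex" and P :: "nat \<Rightarrow> nat \<Rightarrow> complex"
  assumes u: "norm_summable u" "u 0 = 0"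
    and L: "1 \<le> L" "u L \<noteq> 0" "\<And>j. 1 \<le> j \<Longrightarrow> j < L \<Longrightarrow> u j = 0"
    and M: "L < M" "u M \<noteq> 0" "\<And>j. L < j \<Longrightarrow> j < M \<Longrightarrow> u j = 0"
    and P: "\<And>k. norm_summable (P k)" "\<And>k. P k 0 = 0"
      "\<And>k \<sigma>. 0 < \<sigma> \<Longrightarrow> dseries (P k) (of_real \<sigma>) = dseries u (of_real \<sigma>) ^ k"
  shows "\<exists>k\<ge>c. P k (L ^ (k - c) * M ^ c) \<noteq> 0"
proof -
  \<comment> \<open>r = u - a L^-s leads at M, so r^i leads at M^i; in u^k = (r + a L^-s)^k only the terms
    with i \<le> c reach the index L^(k-c) M^c, and they form a nonzero binomial sum for some k.\<close>
  define a where "a = u L"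
  define r where "r n = u n - a * monomial L n" for n
  have r: "norm_summable r"
    unfolding r_def by (intro norm_summable_diff u norm_summable_cmult norm_summable_monomial)
  have r_below: "r j = 0" if "1 \<le> j" "j < M" for j
    using that L(3) M(3) by (cases "j < L"; cases "j = L") (auto simp: r_def a_def monomial_def)
  have "r M = u M" using M(1) by (simp add: r_def monomial_def)
  have M1: "1 \<le> M" "r M \<noteq> 0" using L(1) M(1,2) \<open>r M = u M\<close> by simp_all
  have dseries_u: "dseries u s = dseries r s + a * of_nat L powr (-s)" if "0 \<le> Re s" for s
    using that unfolding r_def
    by (simp add: dseries_diff[OF u(1)] dseries_cmult norm_summable_cmult norm_summable_monomial dseries_monomial)
  define R where "R = binomial_dilate L (-a) P"
  have R: "norm_summable (R i)" for i
    using L P by (simp add: R_def norm_summable_binomial_dilate)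
  have dseries_R: "dseries (R i) (of_real \<sigma>) = dseries r (of_real \<sigma>) ^ i" if "0 < \<sigma>" for i \<sigma>
    using dseries_binomial_dilate[of L P "of_real \<sigma>" "dseries u (of_real \<sigma>)" "-a" i] that L P
    by (simp add: R_def dseries_u)
  have R_lead: "R i (M ^ i) = u M ^ i" and R_below: "\<And>j. 1 \<le> j \<Longrightarrow> j < M ^ i \<Longrightarrow> R i j = 0" for i
    using leading_coeff_powers[OF r M1 r_below R dseries_R] \<open>r M = u M\<close> by simp_all
  have P_eq: "P k = binomial_dilate L a R k" for k
  proof (rule dseries_coeffs_unique[of _ _ 0])
    show "norm_summable (P k)" "norm_summable (binomial_dilate L a R k)"
      using L P(1) R by (simp_all add: norm_summable_binomial_dilate)
    show "P k 0 = binomial_dilate L a R k 0"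
      using P(2) R_def by (simp add: binomial_dilate_at_0)
    show "dseries (P k) (of_real \<sigma>) = dseries (binomial_dilate L a R k) (of_real \<sigma>)" if "0 < \<sigma>" for \<sigma>
      using dseries_binomial_dilate[of L R "of_real \<sigma>" "dseries r (of_real \<sigma>)" a k] that L R
      by (simp add: dseries_R P(3) dseries_u)
  qed
  define \<gamma> where "\<gamma> i = dilate (L ^ (c - i)) (R i) (M ^ c) / a ^ i" for i
  have "\<gamma> c \<noteq> 0" using R_lead M(2) L(2) by (simp add: \<gamma>_def a_def dilate_def)
  then obtain k where k: "k \<ge> c" "(\<Sum>i\<le>c. of_nat (k choose i) * \<gamma> i) \<noteq> 0"
    using binomial_sum_nonzero by blast
  have "P k (L ^ (k - c) * M ^ c) = (\<Sum>i\<le>c. of_nat (k choose i) * a ^ (k - i) * (a ^ i * \<gamma> i))"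
    using L(1,2) unfolding P_eq \<gamma>_def
    by (simp add: binomial_dilate_at_mixed_power[OF L(1) M(1) k(1) R_below] a_def)
  also have "\<dots> = a ^ k * (\<Sum>i\<le>c. of_nat (k choose i) * \<gamma> i)"
    using k(1) by (simp add: sum_distrib_left mult_ac flip: power_add)
  finally show ?thesis using k L(2) by (auto simp: a_def)
qed

lemma norm_summable_shifted_dirichlet_coeffs:
  fixes c :: "nat \<Rightarrow> complex"
  assumes "summable (\<lambda>n. c n * of_nat n powr (- of_real \<sigma>))"
  shows "norm_summable (\<lambda>n. c n * of_nat n powr (- of_real (\<sigma> + 2)))"
proof -
  have "Bseq (\<lambda>n. c n * of_nat n powr (- of_real \<sigma>))"
    using summable_LIMSEQ_zero[OF assms] by (rule convergent_imp_Bseq[OF convergentI])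
  then obtain K where K: "\<And>n. norm (c n * of_nat n powr (- of_real \<sigma>)) \<le> K"
    unfolding Bseq_def by blast
  have "- of_real (\<sigma> + 2) = - of_real \<sigma> + (-2 :: complex)" by simp
  then have split: "(of_nat n :: complex) powr (- of_real (\<sigma> + 2)) = of_nat n powr (- of_real \<sigma>) * of_nat n powr (-2)" for n
    by (simp only: powr_add)
  have bound: "norm (norm (c n * of_nat n powr (- of_real (\<sigma> + 2)))) \<le> K * real n powr (-2)" for n
  proof -
    have "norm ((of_nat n :: complex) powr (-2)) = real n powr (-2)"
      by (simp add: norm_nat_powr)
    then have "norm (c n * of_nat n powr (- of_real (\<sigma> + 2)))
        = norm (c n * of_nat n powr (- of_real \<sigma>)) * real n powr (-2)"
      by (simp only: split norm_mult mult.assoc)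
    also have "\<dots> \<le> K * real n powr (-2)"
      by (intro mult_right_mono K) simp
    finally show ?thesis by simp
  qed
  have "summable (\<lambda>n. K * real n powr (-2))"
    by (intro summable_mult) (simp add: summable_real_powr_iff)
  then show ?thesis
    by (rule summable_comparison_test'[OF _ bound])
qed

lemma dirichlet_series_tendsto_at_top:
  fixes c :: "nat \<Rightarrow> complex"
  assumes sums: "\<And>s. Re s > \<sigma>0 \<Longrightarrow> (\<lambda>n. c n * of_nat n powr (- s)) sums g s"
  shows "((\<lambda>\<sigma>::real. g (of_real \<sigma>)) \<longlongrightarrow> c 1) at_top"
proof -
  define \<sigma>1 where "\<sigma>1 = max \<sigma>0 0 + 1"
  define b where "b n = c n * of_nat n powr (- of_real (\<sigma>1 + 2))" for n
  have b: "norm_summable b"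
    unfolding b_def using sums[of "of_real \<sigma>1"]
    by (intro norm_summable_shifted_dirichlet_coeffs) (auto simp: \<sigma>1_def sums_iff)
  have g_eq: "g (of_real (\<sigma>1 + 2 + \<sigma>)) = dseries b (of_real \<sigma>)" if "0 < \<sigma>" for \<sigma>
  proof -
    have "(\<lambda>n. c n * of_nat n powr (- of_real (\<sigma>1 + 2 + \<sigma>))) = (\<lambda>n. b n * of_nat n powr (- of_real \<sigma>))"
      unfolding b_def by (simp add: fun_eq_iff powr_add[symmetric] algebra_simps)
    then show ?thesis
      using sums[of "of_real (\<sigma>1 + 2 + \<sigma>)"] that unfolding dseries_def \<sigma>1_def by (simp add: sums_iff)
  qed
  have "b 1 = c 1" by (simp add: b_def)
  then have "((\<lambda>\<sigma>::real. dseries b (of_real \<sigma>)) \<longlongrightarrow> c 1) at_top"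
    using leading_coeff_tendsto[OF b, of 1] by simp
  then have "((\<lambda>\<sigma>. g (of_real (\<sigma>1 + 2 + \<sigma>))) \<longlongrightarrow> c 1) at_top"
    by (rule Lim_transform_eventually) (rule eventually_at_top_linorderI[of 1], rule g_eq[symmetric], simp)
  then have "((\<lambda>\<sigma>. g (of_real (\<sigma>1 + 2 + (- (\<sigma>1 + 2) + \<sigma>)))) \<longlongrightarrow> c 1) at_top"
    by (rule filterlim_compose) (rule filterlim_tendsto_add_at_top[OF tendsto_const filterlim_ident])
  then show ?thesis by simp
qed

lemma Dclass_tendsto_at_top: "\<psi> \<in> Dclass \<Longrightarrow> \<exists>c. ((\<lambda>\<sigma>::real. \<psi> (of_real \<sigma>)) \<longlongrightarrow> c) at_top"
  unfolding Dclass_def using dirichlet_series_tendsto_at_top by blast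

lemma constant_on_if_exp_constant:
  fixes g :: "complex \<Rightarrow> complex"
  assumes "connected S" "continuous_on S g" and exp_g: "\<And>s. s \<in> S \<Longrightarrow> exp (g s) = a"
  shows "g constant_on S"
proof (rule continuous_discrete_range_constant[OF assms(1,2)])
  fix x assume x: "x \<in> S"
  show "\<exists>e>0. \<forall>y. y \<in> S \<and> g y \<noteq> g x \<longrightarrow> e \<le> norm (g y - g x)"
  proof (intro exI[of _ "2 * pi"] conjI allI impI)
    fix y assume y: "y \<in> S \<and> g y \<noteq> g x"
    then have "\<not> \<bar>Im (g y) - Im (g x)\<bar> < 2 * pi"
      using exp_complex_eqI exp_g x by metis
    then show "2 * pi \<le> norm (g y - g x)"
      using abs_Im_le_cmod[of "g y - g x"] by simp
  qed simp
qed

lemma eq_shift_if_exp_eq: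
  fixes \<phi> :: "complex \<Rightarrow> complex" and l :: real
  assumes "continuous_on (halfplane 0) \<phi>" "0 < l" "norm a = 1"
    and exp_eq: "\<And>s. s \<in> halfplane 0 \<Longrightarrow> exp (- \<phi> s * of_real l) = a * exp (- s * of_real l) ^ c"
  shows "\<exists>\<tau>::real. \<forall>s\<in>halfplane 0. \<phi> s = of_nat c * s + \<i> * of_real \<tau>"
proof -
  define g where "g s = - (\<phi> s - of_nat c * s) * of_real l" for s
  have exp_g: "exp (g s) = a" if "s \<in> halfplane 0" for s
  proof -
    have "exp (g s) = exp (- \<phi> s * of_real l) * exp (of_nat c * (s * of_real l))"
      by (simp add: g_def exp_add[symmetric] algebra_simps)
    also have "\<dots> = a * (exp (of_nat c * (- s * of_real l)) * exp (of_nat c * (s * of_real l)))"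
      using exp_eq[OF that] exp_of_nat_mult[of c "- s * of_real l"] by simp
    also have "\<dots> = a"
      by (simp add: exp_add[symmetric])
    finally show ?thesis .
  qed
  have "connected (halfplane 0)"
    unfolding halfplane_def by (rule connected_halfspace_Re_gt)
  moreover have "continuous_on (halfplane 0) g"
    unfolding g_def by (intro continuous_intros assms(1))
  ultimately have "g constant_on halfplane 0"
    using exp_g by (rule constant_on_if_exp_constant)
  then obtain g0 where g0: "\<And>s. s \<in> halfplane 0 \<Longrightarrow> g s = g0"
    unfolding constant_on_def by blast
  have "exp g0 = a" using exp_g[of 1] g0[of 1] by simp
  then have "exp (Re g0) = 1" using \<open>norm a = 1\<close> norm_exp_eq_Re[of g0] by simp
  then have "Re g0 = 0" by simp
  show ?thesis
  proof (intro exI[of _ "- Im g0 / l"] ballI)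
    fix s assume "s \<in> halfplane 0"
    then have "(\<phi> s - of_nat c * s) * of_real l = - g0"
      using g0 unfolding g_def by (metis minus_minus mult_minus_left)
    then have "\<phi> s = of_nat c * s - g0 / of_real l"
      using \<open>0 < l\<close> by (simp add: field_simps)
    then show "\<phi> s = of_nat c * s + \<i> * of_real (- Im g0 / l)"
      using \<open>Re g0 = 0\<close> by (simp add: complex_eq_iff)
  qed
qed

lemma comp_rep_monomial:
  assumes "comp_rep \<phi> (monomial m) b"
  shows "norm_summable b" "b 0 = 0" "\<And>s. s \<in> halfplane 0 \<Longrightarrow> dseries b s = of_nat m powr (- \<phi> s)"
  using assms by (auto simp: comp_rep_def Aplus_def dseries_monomial)

lemma comp_rep_add_cmult:
  assumes "\<phi> ` halfplane 0 \<subseteq> halfplane 0"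
    and "comp_rep \<phi> a b" "comp_rep \<phi> a' b'" "norm_summable a" "norm_summable a'"
  shows "comp_rep \<phi> (\<lambda>n. a n + e * a' n) (\<lambda>n. b n + e * b' n)"
  unfolding comp_rep_def
proof
  show "(\<lambda>n. b n + e * b' n) \<in> Aplus"
    using assms(2,3) by (auto simp: comp_rep_def Aplus_def norm_summable_add norm_summable_cmult)
  show "\<forall>s\<in>halfplane 0. dseries (\<lambda>n. a n + e * a' n) (\<phi> s) = dseries (\<lambda>n. b n + e * b' n) s"
  proof
    fix s assume s: "s \<in> halfplane 0"
    then have "0 \<le> Re (\<phi> s)" "0 \<le> Re s" using assms(1) by force+
    with s assms(2-5) show "dseries (\<lambda>n. a n + e * a' n) (\<phi> s) = dseries (\<lambda>n. b n + e * b' n) s"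
      by (auto simp: comp_rep_def Aplus_def dseries_add dseries_cmult norm_summable_cmult)
  qed
qed

lemma complex_norm_add_diff_eq_imp_zero:
  fixes u v :: complex
  assumes "norm (u + v) = norm u + norm v" "norm (u - v) = norm u + norm v"
  shows "u = 0 \<or> v = 0"
proof -
  have "inner u v = norm u * norm v"
    using dot_norm[of u v] assms(1) by (simp add: power2_eq_square algebra_simps)
  moreover have "inner u v = - (norm u * norm v)"
    using dot_norm_neg[of u v] assms(2) by (simp add: power2_eq_square algebra_simps)
  ultimately show ?thesis by simp
qed

lemma norm_add_eq_if_Aplus_norm_add_eq:
  fixes x y :: "nat \<Rightarrow> complex"
  assumes x: "norm_summable x" and y: "norm_summable y"
    and eq: "Aplus_norm (\<lambda>k. x k + y k) = Aplus_norm x + Aplus_norm y"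
  shows "norm (x k + y k) = norm (x k) + norm (y k)"
proof -
  define t where "t k = norm (x k) + norm (y k) - norm (x k + y k)" for k
  have "t sums (Aplus_norm x + Aplus_norm y - Aplus_norm (\<lambda>k. x k + y k))"
    unfolding t_def Aplus_norm_def using x y norm_summable_add[OF x y]
    by (intro sums_diff sums_add summable_sums)
  then have "t sums 0" using eq by simp
  moreover have "0 \<le> t k" for k by (simp add: t_def norm_triangle_ineq)
  ultimately have "t k = 0" using sums_unique2 suminf_eq_zero_iff by (metis sums_iff)
  then show ?thesis by (simp add: t_def)
qed

locale isometric_composition =
  fixes \<phi> \<psi> :: "complex \<Rightarrow> complex" and c0 :: nat
  assumes holomorphic: "\<phi> holomorphic_on halfplane 0"
    and maps_halfplane: "\<phi> ` halfplane 0 \<subseteq> halfplane 0"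
    and psi_Dclass: "\<psi> \<in> Dclass"
    and phi_eq: "\<forall>s\<in>halfplane 0. \<phi> s = of_nat c0 * s + \<psi> s"
    and comp_rep_exists: "\<forall>a\<in>Aplus. \<exists>b. comp_rep \<phi> a b"
    and isometric: "\<forall>a\<in>Aplus. \<forall>b. comp_rep \<phi> a b \<longrightarrow> Aplus_norm b = Aplus_norm a"
begin

definition comp_monomial :: "nat \<Rightarrow> nat \<Rightarrow> complex" where
  "comp_monomial m = (SOME b. comp_rep \<phi> (monomial m) b)"

lemma comp_rep_comp_monomial:
  assumes "1 \<le> m" shows "comp_rep \<phi> (monomial m) (comp_monomial m)"
proof -
  have "\<exists>b. comp_rep \<phi> (monomial m) b" using comp_rep_exists monomial_in_Aplus[OF assms] by blast
  then show ?thesis unfolding comp_monomial_def by (rule someI_ex)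
qed

lemma norm_summable_comp_monomial: "1 \<le> m \<Longrightarrow> norm_summable (comp_monomial m)"
  and comp_monomial_at_0: "1 \<le> m \<Longrightarrow> comp_monomial m 0 = 0"
  and dseries_comp_monomial:
    "1 \<le> m \<Longrightarrow> s \<in> halfplane 0 \<Longrightarrow> dseries (comp_monomial m) s = of_nat m powr (- \<phi> s)"
  using comp_rep_monomial[OF comp_rep_comp_monomial] by simp_all

lemma Aplus_norm_comp_monomial:
  assumes "1 \<le> m" shows "Aplus_norm (comp_monomial m) = 1"
proof -
  have "Aplus_norm (comp_monomial m) = Aplus_norm (monomial m)"
    using isometric comp_rep_comp_monomial[OF assms] monomial_in_Aplus[OF assms] by blast
  also have "\<dots> = 1"
    using Aplus_norm_cmult_monomial[of 1 m] by simp
  finally show ?thesis .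
qed

lemma comp_monomial_leading:
  assumes m: "1 \<le> m"
  shows "comp_monomial m (m ^ c0) \<noteq> 0" "\<And>j. 1 \<le> j \<Longrightarrow> j < m ^ c0 \<Longrightarrow> comp_monomial m j = 0"
proof -
  obtain c1 where c1: "((\<lambda>\<sigma>::real. \<psi> (of_real \<sigma>)) \<longlongrightarrow> c1) at_top"
    using Dclass_tendsto_at_top[OF psi_Dclass] by blast
  have eq: "of_real (real (m ^ c0) powr \<sigma>) * dseries (comp_monomial m) (of_real \<sigma>) = of_nat m powr (- \<psi> (of_real \<sigma>))"
    if "0 < \<sigma>" for \<sigma>
  proof -
    have "dseries (comp_monomial m) (of_real \<sigma>) = of_nat m powr (- (of_nat c0 * of_real \<sigma> + \<psi> (of_real \<sigma>)))"
      using that m phi_eq by (simp add: dseries_comp_monomial)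
    also have "\<dots> = of_nat m powr (- \<psi> (of_real \<sigma>)) * of_nat (m ^ c0) powr (- of_real \<sigma>)"
      by (rule nat_powr_shift)
    finally have "of_real (real (m ^ c0) powr \<sigma>) * dseries (comp_monomial m) (of_real \<sigma>)
        = of_nat m powr (- \<psi> (of_real \<sigma>)) * (of_real (real (m ^ c0) powr \<sigma>) * of_nat (m ^ c0) powr (- of_real \<sigma>))"
      by (simp only: mult_ac)
    also have "of_real (real (m ^ c0) powr \<sigma>) * (of_nat (m ^ c0) :: complex) powr (- of_real \<sigma>) = 1"
      using m by (subst scaled_nat_powr) simp_all
    finally show ?thesis by simp
  qed
  have "((\<lambda>\<sigma>. exp (- \<psi> (of_real \<sigma>) * of_real (ln (real m)))) \<longlongrightarrow> exp (- c1 * of_real (ln (real m)))) at_top"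
    by (intro tendsto_intros c1)
  then have "((\<lambda>\<sigma>::real. of_nat m powr (- \<psi> (of_real \<sigma>))) \<longlongrightarrow> of_nat m powr (- c1)) at_top"
    using m by (simp add: nat_powr_eq_exp)
  then have "((\<lambda>\<sigma>::real. of_real (real (m ^ c0) powr \<sigma>) * dseries (comp_monomial m) (of_real \<sigma>))
      \<longlongrightarrow> of_nat m powr (- c1)) at_top"
    by (rule Lim_transform_eventually) (rule eventually_at_top_linorderI[of 1], rule eq[symmetric], simp)
  from leading_coeff_from_limit[OF norm_summable_comp_monomial[OF m] _ this] m
  show "comp_monomial m (m ^ c0) \<noteq> 0" "\<And>j. 1 \<le> j \<Longrightarrow> j < m ^ c0 \<Longrightarrow> comp_monomial m j = 0"
    by simp_all
qed

lemma comp_monomial_disjoint: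
  assumes nm: "n \<noteq> m" and n: "1 \<le> n" and m: "1 \<le> m"
  shows "comp_monomial n j = 0 \<or> comp_monomial m j = 0"
proof -
  let ?x = "comp_monomial n" and ?y = "comp_monomial m"
  have x: "norm_summable ?x" and y: "norm_summable ?y"
    using n m by (simp_all add: norm_summable_comp_monomial)
  have "norm (?x j + e * ?y j) = norm (?x j) + norm (?y j)" if e: "norm e = 1" for e
  proof -
    have "comp_rep \<phi> (\<lambda>k. monomial n k + e * monomial m k) (\<lambda>k. ?x k + e * ?y k)"
      using n m by (intro comp_rep_add_cmult maps_halfplane comp_rep_comp_monomial norm_summable_monomial)
    moreover have "(\<lambda>k. monomial n k + e * monomial m k) \<in> Aplus"
      using n m norm_summable_add[OF norm_summable_monomial norm_summable_cmult[OF norm_summable_monomial]]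
      by (simp add: Aplus_def monomial_def)
    ultimately have "Aplus_norm (\<lambda>k. ?x k + e * ?y k) = Aplus_norm (\<lambda>k. monomial n k + e * monomial m k)"
      using isometric by blast
    also have "\<dots> = Aplus_norm ?x + Aplus_norm (\<lambda>k. e * ?y k)"
      using Aplus_norm_two_monomials[OF nm] Aplus_norm_comp_monomial[OF n] Aplus_norm_comp_monomial[OF m] e
      by (simp add: Aplus_norm_def norm_mult)
    finally have "norm (?x j + e * ?y j) = norm (?x j) + norm (e * ?y j)"
      by (intro norm_add_eq_if_Aplus_norm_add_eq x norm_summable_cmult y)
    then show ?thesis using e by (simp add: norm_mult)
  qed
  from this[of 1] this[of "-1"] show ?thesis
    by (intro complex_norm_add_diff_eq_imp_zero) simp_all
qed

lemma exponent_ge_1: "1 \<le> c0"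
proof (rule ccontr)
  assume "\<not> 1 \<le> c0"
  then have "c0 = 0" by simp
  then have "comp_monomial 2 1 \<noteq> 0" "comp_monomial 3 1 \<noteq> 0"
    using comp_monomial_leading(1)[of 2] comp_monomial_leading(1)[of 3] by simp_all
  then show False using comp_monomial_disjoint[of 2 3 1] by simp
qed

lemma comp_monomial_two_eq_0: "j \<noteq> 2 ^ c0 \<Longrightarrow> comp_monomial 2 j = 0"
proof (rule ccontr)
  define u where "u = comp_monomial 2"
  define L where "L = (2::nat) ^ c0"
  have two: "(1::nat) \<le> 2" by simp
  have u: "norm_summable u" "u 0 = 0" "1 \<le> L" "u L \<noteq> 0" "\<And>j. 1 \<le> j \<Longrightarrow> j < L \<Longrightarrow> u j = 0"
    unfolding u_def L_def
    by (simp_all add: norm_summable_comp_monomial comp_monomial_at_0 comp_monomial_leading[OF two])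
  assume "j \<noteq> 2 ^ c0" "comp_monomial 2 j \<noteq> 0"
  then have "L < j"
    using u(2,5) unfolding u_def L_def by (metis le_neq_implies_less less_one not_le)
  with \<open>comp_monomial 2 j \<noteq> 0\<close> have "\<exists>j>L. u j \<noteq> 0" by (auto simp: u_def)
  then obtain M where M: "L < M" "u M \<noteq> 0" "\<And>j. L < j \<Longrightarrow> j < M \<Longrightarrow> u j = 0"
    using obtain_next_nonzero by blast
  have P: "norm_summable (comp_monomial (2 ^ k))" "comp_monomial (2 ^ k) 0 = 0" for k
    by (simp_all add: norm_summable_comp_monomial comp_monomial_at_0)
  have dseries_power: "dseries (comp_monomial (2 ^ k)) (of_real \<sigma>) = dseries u (of_real \<sigma>) ^ k"
    if "0 < \<sigma>" for k \<sigma>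
    using that nat_power_powr[of 2 k] by (simp add: u_def dseries_comp_monomial)
  obtain k where k: "k \<ge> c0" "comp_monomial (2 ^ k) (L ^ (k - c0) * M ^ c0) \<noteq> 0"
    using power_coeff_at_mixed_power_nonzero[OF u M P dseries_power] by blast
  define m where "m = 2 ^ (k - c0) * M"
  have "m ^ c0 = L ^ (k - c0) * M ^ c0"
    by (simp add: m_def L_def power_mult_distrib flip: power_mult)
  moreover have "2 ^ k \<noteq> m"
  proof
    assume "2 ^ k = m"
    moreover have "(2::nat) ^ k = 2 ^ (k - c0) * 2 ^ c0" using k(1) by (simp flip: power_add)
    ultimately show False using M(1) by (simp add: m_def L_def)
  qed
  moreover have "1 \<le> m" using M(1) by (simp add: m_def)
  ultimately show False
    using comp_monomial_disjoint[of "2 ^ k" m "m ^ c0"] comp_monomial_leading(1)[of m] k(2) by simp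
qed

lemma phi_eq_shift: "\<exists>\<tau>::real. \<forall>s\<in>halfplane 0. \<phi> s = of_nat c0 * s + \<i> * of_real \<tau>"
proof -
  define a where "a = comp_monomial 2 (2 ^ c0)"
  have u: "comp_monomial 2 = (\<lambda>j. a * monomial (2 ^ c0) j)"
    by (auto simp: fun_eq_iff a_def monomial_def comp_monomial_two_eq_0)
  have norm_a: "norm a = 1"
    using Aplus_norm_comp_monomial[of 2] Aplus_norm_cmult_monomial[of a "2 ^ c0"] by (simp add: u)
  have exp_eq: "exp (- \<phi> s * of_real (ln 2)) = a * exp (- s * of_real (ln 2)) ^ c0"
    if "s \<in> halfplane 0" for s
  proof -
    have two: "(2 :: complex) powr w = exp (w * of_real (ln 2))" for w
      using nat_powr_eq_exp[of 2 w] by simp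
    have "2 powr (- \<phi> s) = a * (2 powr (- s)) ^ c0"
      using dseries_comp_monomial[of 2 s] that nat_power_powr[of 2 c0 "- s"]
      by (simp add: u dseries_cmult norm_summable_monomial dseries_monomial)
    then show ?thesis by (simp add: two mult_ac)
  qed
  have "0 < ln (2::real)" by (rule ln_gt_zero) simp
  then show ?thesis
    by (rule eq_shift_if_exp_eq[OF holomorphic_on_imp_continuous_on[OF holomorphic] _ norm_a exp_eq])
qed

end

theorem theorem22:
  fixes \<phi> \<psi> :: "complex \<Rightarrow> complex" and c0 :: nat
  assumes "\<phi> holomorphic_on halfplane 0"
    and "\<phi> ` halfplane 0 \<subseteq> halfplane 0"
    and "\<not> (\<exists>c. \<forall>s \<in> halfplane 0. \<phi> s = c)"
    and "\<psi> \<in> Dclass"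
    and "\<forall>s \<in> halfplane 0. \<phi> s = of_nat c0 * s + \<psi> s"
    and "\<forall>a \<in> Aplus. \<exists>b. comp_rep \<phi> a b"
  shows "(\<forall>a \<in> Aplus. \<forall>b. comp_rep \<phi> a b \<longrightarrow> Aplus_norm b = Aplus_norm a)
     \<longleftrightarrow> (c0 \<ge> 1 \<and> (\<exists>\<tau>::real. \<forall>s \<in> halfplane 0. \<phi> s = of_nat c0 * s + \<i> * of_real \<tau>))"
proof
  assume "\<forall>a \<in> Aplus. \<forall>b. comp_rep \<phi> a b \<longrightarrow> Aplus_norm b = Aplus_norm a"
  then interpret isometric_composition \<phi> \<psi> c0
    using assms by unfold_locales
  show "c0 \<ge> 1 \<and> (\<exists>\<tau>::real. \<forall>s \<in> halfplane 0. \<phi> s = of_nat c0 * s + \<i> * of_real \<tau>)"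
    using exponent_ge_1 phi_eq_shift by blast
next
  assume "c0 \<ge> 1 \<and> (\<exists>\<tau>::real. \<forall>s \<in> halfplane 0. \<phi> s = of_nat c0 * s + \<i> * of_real \<tau>)"
  then show "\<forall>a \<in> Aplus. \<forall>b. comp_rep \<phi> a b \<longrightarrow> Aplus_norm b = Aplus_norm a"
    using Aplus_norm_comp_rep_shift by blast
qed

end
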